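(* Let $\Sigma$ be a graded alphabet and $L_1,L_2$ two finite tree languages over $\Sigma$. Let $(\Sigma,Q,\nu,\delta)$ be the accessible part of the product RWTA $A_{L_1}\times A_{L_2}$ (over the semiring $(\mathbb{N},+,\times,0,1)$). Then $\mathrm{KerSeries}(L_1,L_2)=\nu(Q)=\sum_{q\in Q}\nu(q)$.
   Context: A graded alphabet is a finite set $\Sigma=\bigcup_{k\in\mathbb{N}}\Sigma_k$; $T_\Sigma$ is the set of trees $f(t_1,\ldots,t_k)$ with $f\in\Sigma_k$. A RWTA is $A=(\Sigma,Q,\nu,\delta)$ with $Q$ finite, $\nu:Q\to\mathbb{N}$, $\delta\subseteq\bigcup_k Q\times\Sigma_k\times Q^k$; $\delta(f,q_1,\ldots,q_k)=\{q\mid(q,f,q_1,\ldots,q_k)\in\delta\}$, extended to subsets by union over tuples; $\Delta(f(t_1,\ldots,t_k))=\delta(f,\Delta(t_1),\ldots,\Delta(t_k))$. The down language of a state $q$ is $L_q(A)=\{t\mid q\in\Delta(t)\}$; the accessible part of $A$ is the RWTA obtained by keeping only the states $q$ with $L_q(A)\neq\emptyset$, restricting $\nu$ and $\delta$ to them. For $A_i=(\Sigma,Q_i,\nu_i,\delta_i)$, the product $A_1\times A_2$ has states $Q_1\times Q_2$, transitions $\delta'(f,(q_{1_1},q_{2_1}),\ldots,(q_{1_k},q_{2_k}))=\delta_1(f,q_{1_1},\ldots,q_{1_k})\times\delta_2(f,q_{2_1},\ldots,q_{2_k})$, and weights $\nu'((q_1,q_2))=\nu_1(q_1)\nu_2(q_2)$.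 For $t=f(t_1,\ldots,t_k)$, $\mathrm{SubTree}(t)=\{t\}\cup\bigcup_j\mathrm{SubTree}(t_j)$; $\mathrm{SubTreeSet}(L)=\bigcup_{t\in L}\mathrm{SubTree}(t)$; $\mathrm{SubTreeSeries}_t(s)$ is the number of nodes of $t$ whose subtree equals $s$, and $\mathrm{SubTreeSeries}_L=\sum_{t\in L}\mathrm{SubTreeSeries}_t$. The sequential subtree automaton of $L$ is $A_L=(\Sigma,\mathrm{SubTreeSet}(L),\nu,\delta)$ with $\nu(t')=\mathrm{SubTreeSeries}_L(t')$ and, for $f\in\Sigma_k$, $t_{k+1}\in\delta(f,t_1,\ldots,t_k)$ iff $t_{k+1}=f(t_1,\ldots,t_k)$. The subtree series kernel is $\mathrm{KerSeries}(L_1,L_2)=\sum_{t\in T_\Sigma}\mathrm{SubTreeSeries}_{L_1}(t)\cdot\mathrm{SubTreeSeries}_{L_2}(t)$. *)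

theory Defs
  imports "HOL-Analysis.Analysis"
begin

text \<open>A graded alphabet is a finite set of pairs (f, k), meaning f belongs to Sigma_k.\<close>

datatype 'f tree = Node 'f "'f tree list"

inductive_set trees :: "('f \<times> nat) set \<Rightarrow> 'f tree set" for \<Sigma> where
  "(f, length ts) \<in> \<Sigma> \<Longrightarrow> (\<forall>t\<in>set ts. t \<in> trees \<Sigma>) \<Longrightarrow> Node f ts \<in> trees \<Sigma>"

record ('f, 'q) rwta =
  states :: "'q set"
  weight :: "'q \<Rightarrow> nat"
  trans  :: "('q \<times> 'f \<times> 'q list) set"

definition is_rwta :: "('f \<times> nat) set \<Rightarrow> ('f, 'q) rwta \<Rightarrow> bool" where
  "is_rwta \<Sigma> A \<longleftrightarrow> finite (states A) \<and>
     (\<forall>(q, f, qs) \<in> trans A. q \<in> states A \<and> set qs \<subseteq> states A \<and> (f, length qs) \<in> \<Sigma>)"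

text \<open>q \<in> Delta(t): unfolding Delta(f(t1..tk)) = delta(f, Delta(t1), ..., Delta(tk)).\<close>
inductive reach :: "('f, 'q) rwta \<Rightarrow> 'f tree \<Rightarrow> 'q \<Rightarrow> bool" for A where
  "(q, f, qs) \<in> trans A \<Longrightarrow> list_all2 (reach A) ts qs \<Longrightarrow> reach A (Node f ts) q"

definition Delta :: "('f, 'q) rwta \<Rightarrow> 'f tree \<Rightarrow> 'q set" where
  "Delta A t = {q. reach A t q}"

definition down_lang :: "('f \<times> nat) set \<Rightarrow> ('f, 'q) rwta \<Rightarrow> 'q \<Rightarrow> 'f tree set" where
  "down_lang \<Sigma> A q = {t \<in> trees \<Sigma>. q \<in> Delta A t}"

definition accessible_part :: "('f \<times> nat) set \<Rightarrow> ('f, 'q) rwta \<Rightarrow> ('f, 'q) rwta" where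
  "accessible_part \<Sigma> A =
     (let Q' = {q \<in> states A. down_lang \<Sigma> A q \<noteq> {}} in
      \<lparr> states = Q',
        weight = (\<lambda>q. if q \<in> Q' then weight A q else 0),
        trans = {(q, f, qs) \<in> trans A. q \<in> Q' \<and> set qs \<subseteq> Q'} \<rparr>)"

definition prod_rwta :: "('f, 'q1) rwta \<Rightarrow> ('f, 'q2) rwta \<Rightarrow> ('f, 'q1 \<times> 'q2) rwta" where
  "prod_rwta A1 A2 =
     \<lparr> states = states A1 \<times> states A2,
       weight = (\<lambda>(q1, q2). weight A1 q1 * weight A2 q2),
       trans = {((q1, q2), f, zip qs1 qs2) | q1 q2 f qs1 qs2.
                  (q1, f, qs1) \<in> trans A1 \<and> (q2, f, qs2) \<in> trans A2 \<and>
                  length qs1 = length qs2} \<rparr>"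

fun SubTree :: "'f tree \<Rightarrow> 'f tree set" where
  "SubTree (Node f ts) = insert (Node f ts) (\<Union>t\<in>set ts. SubTree t)"

definition SubTreeSet :: "'f tree set \<Rightarrow> 'f tree set" where
  "SubTreeSet L = (\<Union>t\<in>L. SubTree t)"

fun SubTreeSeries_t :: "'f tree \<Rightarrow> 'f tree \<Rightarrow> nat" where
  "SubTreeSeries_t (Node f ts) s =
     (if Node f ts = s then 1 else 0) + sum_list (map (\<lambda>c. SubTreeSeries_t c s) ts)"

definition SubTreeSeries :: "'f tree set \<Rightarrow> 'f tree \<Rightarrow> nat" where
  "SubTreeSeries L s = (\<Sum>t\<in>L. SubTreeSeries_t t s)"

definition subtree_automaton :: "'f tree set \<Rightarrow> ('f, 'f tree) rwta" where
  "subtree_automaton L =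
     \<lparr> states = SubTreeSet L,
       weight = SubTreeSeries L,
       trans = {(Node f ts, f, ts) | f ts. Node f ts \<in> SubTreeSet L \<and> set ts \<subseteq> SubTreeSet L} \<rparr>"

definition KerSeries :: "('f \<times> nat) set \<Rightarrow> 'f tree set \<Rightarrow> 'f tree set \<Rightarrow> nat" where
  "KerSeries \<Sigma> L1 L2 = (\<Sum>\<^sub>\<infinity>t\<in>trees \<Sigma>. SubTreeSeries L1 t * SubTreeSeries L2 t)"

end

theory Submission
  imports Defs
begin

text \<open>A tree t is recognized by the product automaton in state (q1, q2) exactly when it is
recognized by the factors in q1 and q2, and the subtree automaton of L recognizes t only in
the state t itself, and only when t is a subtree of L. Hence the accessible states of the
product are the pairs (t, t) with t a common subtree of L1 and L2, carrying the weight
SubTreeSeries L1 t * SubTreeSeries L2 t; these are also the only trees contributing to the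
kernel, which is therefore the finite sum of these weights.\<close>

lemma finite_SubTree: "finite (SubTree t)"
  by (induction t rule: SubTree.induct) auto

lemma SubTree_self: "t \<in> SubTree t"
  by (cases t) auto

lemma SubTree_trans: "u \<in> SubTree t \<Longrightarrow> SubTree u \<subseteq> SubTree t"
  by (induction t arbitrary: u rule: SubTree.induct) auto

lemma SubTree_subset_trees: "t \<in> trees \<Sigma> \<Longrightarrow> SubTree t \<subseteq> trees \<Sigma>"
  by (induction t rule: trees.induct) (auto intro: trees.intros)

lemma finite_SubTreeSet: "finite L \<Longrightarrow> finite (SubTreeSet L)"
  unfolding SubTreeSet_def by (simp add: finite_SubTree)

lemma SubTreeSet_subset_trees: "L \<subseteq> trees \<Sigma> \<Longrightarrow> SubTreeSet L \<subseteq> trees \<Sigma>"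
  unfolding SubTreeSet_def using SubTree_subset_trees by blast

lemma SubTreeSet_children: "Node f ts \<in> SubTreeSet L \<Longrightarrow> set ts \<subseteq> SubTreeSet L"
  unfolding SubTreeSet_def using SubTree_trans SubTree_self by fastforce

lemma SubTreeSeries_t_nonzero_imp_SubTree: "SubTreeSeries_t t s \<noteq> 0 \<Longrightarrow> s \<in> SubTree t"
proof (induction t rule: SubTree.induct)
  case (1 f ts)
  show ?case
  proof (cases "Node f ts = s")
    case False
    with "1.prems" have "sum_list (map (\<lambda>c. SubTreeSeries_t c s) ts) \<noteq> 0"
      by simp
    then obtain c where "c \<in> set ts" "SubTreeSeries_t c s \<noteq> 0"
      by (induction ts) auto
    with "1.IH" show ?thesis by auto
  qed auto
qed

lemma SubTreeSeries_nonzero_imp_SubTreeSet: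
  "SubTreeSeries L s \<noteq> 0 \<Longrightarrow> s \<in> SubTreeSet L"
  unfolding SubTreeSeries_def SubTreeSet_def
  using SubTreeSeries_t_nonzero_imp_SubTree by (metis UN_I sum.neutral)

lemma KerSeries_eq_sum_common_subtrees:
  assumes "L1 \<subseteq> trees \<Sigma>" "finite L1"
  shows "KerSeries \<Sigma> L1 L2 =
    (\<Sum>t\<in>SubTreeSet L1 \<inter> SubTreeSet L2. SubTreeSeries L1 t * SubTreeSeries L2 t)"
proof -
  have "KerSeries \<Sigma> L1 L2 =
      (\<Sum>\<^sub>\<infinity>t\<in>SubTreeSet L1 \<inter> SubTreeSet L2. SubTreeSeries L1 t * SubTreeSeries L2 t)"
    unfolding KerSeries_def
    using SubTreeSet_subset_trees[OF assms(1)] SubTreeSeries_nonzero_imp_SubTreeSet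
    by (intro infsum_cong_neutral) auto
  then show ?thesis
    using assms(2) by (simp add: finite_SubTreeSet)
qed

lemma prod_rwta_trans_iff:
  "((q1, q2), f, qs) \<in> trans (prod_rwta A1 A2) \<longleftrightarrow>
    (\<exists>qs1 qs2. qs = zip qs1 qs2 \<and> length qs1 = length qs2 \<and>
      (q1, f, qs1) \<in> trans A1 \<and> (q2, f, qs2) \<in> trans A2)"
  unfolding prod_rwta_def by auto

lemma reach_prod_rwta_iff:
  "reach (prod_rwta A1 A2) t (q1, q2) \<longleftrightarrow> reach A1 t q1 \<and> reach A2 t q2"
proof
  show "reach (prod_rwta A1 A2) t (q1, q2) \<Longrightarrow> reach A1 t q1 \<and> reach A2 t q2"
  proof (induction t "(q1, q2)" arbitrary: q1 q2 rule: reach.induct)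
    case (1 f qs ts)
    then obtain qs1 qs2 where qs: "qs = zip qs1 qs2" "length qs1 = length qs2"
      and tr: "(q1, f, qs1) \<in> trans A1" "(q2, f, qs2) \<in> trans A2"
      by (auto simp: prod_rwta_trans_iff)
    from "1.hyps"(2) have "list_all2 (\<lambda>t q. reach A1 t (fst q) \<and> reach A2 t (snd q)) ts qs"
      by (rule list_all2_mono) auto
    then have "list_all2 (reach A1) ts qs1" "list_all2 (reach A2) ts qs2"
      using qs by (auto simp: list_all2_conv_all_nth)
    with tr show ?case
      by (auto intro: reach.intros)
  qed
next
  show "reach A1 t q1 \<and> reach A2 t q2 \<Longrightarrow> reach (prod_rwta A1 A2) t (q1, q2)"
  proof (elim conjE, induction arbitrary: q2 rule: reach.induct)
    case (1 q1 f qs1 ts)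
    from "1.prems" obtain qs2 where tr2: "(q2, f, qs2) \<in> trans A2"
      and ts2: "list_all2 (reach A2) ts qs2"
      by (cases rule: reach.cases) auto
    have len: "length qs1 = length qs2"
      using list_all2_lengthD[OF "1.IH"] list_all2_lengthD[OF ts2] by simp
    with "1.hyps"(1) tr2 have "((q1, q2), f, zip qs1 qs2) \<in> trans (prod_rwta A1 A2)"
      by (auto simp: prod_rwta_trans_iff)
    moreover have "list_all2 (reach (prod_rwta A1 A2)) ts (zip qs1 qs2)"
      using "1.IH" ts2 len by (auto simp: list_all2_conv_all_nth)
    ultimately show ?case
      by (rule reach.intros)
  qed
qed

lemma reach_subtree_automaton_iff:
  "reach (subtree_automaton L) t q \<longleftrightarrow> q = t \<and> t \<in> SubTreeSet L"
proof
  show "reach (subtree_automaton L) t q \<Longrightarrow> q = t \<and> t \<in> SubTreeSet L"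
  proof (induction rule: reach.induct)
    case (1 q f qs ts)
    from "1"(2) have "list_all2 (=) ts qs"
      by (rule list_all2_mono) simp
    then have "ts = qs"
      by (simp add: list_all2_eq)
    with "1.hyps"(1) show ?case
      by (auto simp: subtree_automaton_def)
  qed
next
  have "reach (subtree_automaton L) t t" if "t \<in> SubTreeSet L" for t
    using that
  proof (induction t)
    case (Node f ts)
    have children: "set ts \<subseteq> SubTreeSet L"
      using Node.prems by (rule SubTreeSet_children)
    have "(Node f ts, f, ts) \<in> trans (subtree_automaton L)"
      using Node.prems children by (simp add: subtree_automaton_def)
    moreover have "list_all2 (reach (subtree_automaton L)) ts ts"
      using Node.IH children by (intro list.rel_refl_strong) blast
    ultimately show ?case
      by (rule reach.intros)
  qed
  then show "q = t \<and> t \<in> SubTreeSet L \<Longrightarrow> reach (subtree_automaton L) t q"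
    by blast
qed

lemma sum_weight_accessible_part:
  "(\<Sum>q\<in>states (accessible_part \<Sigma> A). weight (accessible_part \<Sigma> A) q) =
    (\<Sum>q\<in>{q \<in> states A. \<exists>t\<in>trees \<Sigma>. reach A t q}. weight A q)"
  by (auto simp: accessible_part_def down_lang_def Delta_def Let_def intro!: sum.cong)

lemma accessible_states_prod_subtree_automata:
  assumes "L1 \<subseteq> trees \<Sigma>"
  shows "{q \<in> states (prod_rwta (subtree_automaton L1) (subtree_automaton L2)).
            \<exists>t\<in>trees \<Sigma>. reach (prod_rwta (subtree_automaton L1) (subtree_automaton L2)) t q}
    = (\<lambda>t. (t, t)) ` (SubTreeSet L1 \<inter> SubTreeSet L2)"
proof -
  have "states (prod_rwta (subtree_automaton L1) (subtree_automaton L2)) =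
      SubTreeSet L1 \<times> SubTreeSet L2"
    by (simp add: prod_rwta_def subtree_automaton_def)
  moreover have "reach (prod_rwta (subtree_automaton L1) (subtree_automaton L2)) t q \<longleftrightarrow>
      q = (t, t) \<and> t \<in> SubTreeSet L1 \<inter> SubTreeSet L2" for t q
    by (cases q) (auto simp: reach_prod_rwta_iff reach_subtree_automaton_iff)
  ultimately show ?thesis
    using SubTreeSet_subset_trees[OF assms] by blast
qed

theorem theorem2:
  fixes \<Sigma> :: "('f \<times> nat) set" and L1 L2 :: "'f tree set"
  assumes "finite \<Sigma>"
    and "finite L1" and "L1 \<subseteq> trees \<Sigma>"
    and "finite L2" and "L2 \<subseteq> trees \<Sigma>"
  shows "KerSeries \<Sigma> L1 L2 =
     (let A = accessible_part \<Sigma> (prod_rwta (subtree_automaton L1) (subtree_automaton L2))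
      in \<Sum>q\<in>states A. weight A q)"
proof -
  let ?P = "prod_rwta (subtree_automaton L1) (subtree_automaton L2)"
  have "(\<Sum>q\<in>states (accessible_part \<Sigma> ?P). weight (accessible_part \<Sigma> ?P) q)
      = (\<Sum>q\<in>(\<lambda>t. (t, t)) ` (SubTreeSet L1 \<inter> SubTreeSet L2). weight ?P q)"
    by (simp only: sum_weight_accessible_part accessible_states_prod_subtree_automata[OF assms(3)])
  also have "\<dots> = (\<Sum>t\<in>SubTreeSet L1 \<inter> SubTreeSet L2. SubTreeSeries L1 t * SubTreeSeries L2 t)"
    by (simp add: sum.reindex inj_on_def prod_rwta_def subtree_automaton_def)
  also have "\<dots> = KerSeries \<Sigma> L1 L2"
    using assms(2,3) by (simp add: KerSeries_eq_sum_common_subtrees)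
  finally show ?thesis
    by (simp add: Let_def)
qed

end
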